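(* Let $k$ be a positive integer whose binary expansion has $m>2$ nonzero bits. Then the numerators of the fractions $s_{k,k}$ and $s_{2k}$, written in lowest terms, are both divisible by $2^{m-2}$.
   Context: For a partition $I=(i_1,\dots,i_r)$ of $k$, write $p_I=p_{i_1}\cdots p_{i_r}$ and let $s_I\in\mathbb{Q}$ denote the coefficient of $p_I$ in the $k$-th Hirzebruch $\mathcal{L}$-polynomial, i.e. $\mathcal{L}_k(p_1,\dots,p_k)=\sum_{|I|=k}s_Ip_I$, where $1+\mathcal{L}_1+\mathcal{L}_2+\cdots$ is the multiplicative sequence with characteristic power series $\sqrt{t}/\tanh\sqrt{t}$. In particular $s_k=\frac{2^{2k}(2^{2k-1}-1)|B_{2k}|}{(2k)!}$ (with $B_j$ the Bernoulli numbers) and $s_{k,k}=\tfrac12(s_k^2-s_{2k})$. *)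

theory Defs
  imports Complex_Main
begin

text \<open>Bernoulli numbers (convention B_1 = -1/2; only even indices are used):
  B_0 = 1 and sum_{j=0}^{n} C(n+1,j) B_j = 0 for n >= 1.\<close>
fun bernoulli :: "nat \<Rightarrow> rat" where
  "bernoulli n = (if n = 0 then 1 else
     - (\<Sum>j<n. of_nat (Suc n choose j) * bernoulli j) / of_nat (Suc n))"

text \<open>Coefficient s_k of p_k in the Hirzebruch L-polynomial L_k.\<close>
definition s_single :: "nat \<Rightarrow> rat" where
  "s_single k = 2 ^ (2 * k) * (2 ^ (2 * k - 1) - 1) * \<bar>bernoulli (2 * k)\<bar> / fact (2 * k)"

text \<open>Coefficient s_{k,k} of p_k^2 in L_{2k}.\<close>
definition s_double :: "nat \<Rightarrow> rat" where
  "s_double k = (s_single k ^ 2 - s_single (2 * k)) / 2"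

fun popcount :: "nat \<Rightarrow> nat" where
  "popcount n = (if n = 0 then 0 else n mod 2 + popcount (n div 2))"

definition numerator :: "rat \<Rightarrow> int" where
  "numerator q = fst (quotient_of q)"

end

theory Submission
  imports Defs
begin

(* Call a rational 2-integral if it can be written a/b with b odd.
   (1) From the defining recurrence of the Bernoulli numbers one derives the identity
       sum_{j<=n} C(n+1,j) 2^(n+1-j) B_j = n+1  (n > 0), which expresses 2 B_n through
       the 2 B_j with j < n and factors 2^(d-1)/d; the latter are 2-integral, so by strong
       induction 2 B_n is 2-integral for every n.
   (2) Legendre's formula for p = 2: n! = 2^(n - popcount n) * (odd number).
   Combining both, s_n = 2^(2n) (2^(2n-1)-1) |B_2n| / (2n)! equals 2^(popcount n - 1)
   times a 2-integral rational.  For popcount k = m this gives s_k = 2^(m-1) r1 and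
   s_2k = 2^(m-1) r2, hence s_{k,k} = (s_k^2 - s_2k)/2 = 2^(m-2) (2^(m-1) r1^2 - r2).
   Finally, the reduced numerator of 2^e r is divisible by 2^e whenever r is 2-integral. *)

declare bernoulli.simps [simp del] popcount.simps [simp del]

lemma bernoulli_0: "bernoulli 0 = 1"
  by (simp add: bernoulli.simps)

lemma bernoulli_recurrence:
  assumes "m \<ge> 2"
  shows "(\<Sum>j<m. of_nat (m choose j) * bernoulli j) = 0"
proof -
  obtain n where n: "m = Suc n" "n > 0" using assms by (cases m) auto
  have "bernoulli n * of_nat (Suc n) = - (\<Sum>j<n. of_nat (Suc n choose j) * bernoulli j)"
    using n(2) by (subst bernoulli.simps) (simp del: of_nat_Suc)
  then show ?thesis by (simp add: n(1) algebra_simps del: of_nat_Suc)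
qed

lemma bernoulli_recurrence':
  assumes "m \<ge> 1"
  shows "(\<Sum>j<m. of_nat (m choose j) * bernoulli j) = (if m = 1 then 1 else 0)"
  using bernoulli_recurrence[of m] assms by (cases "m = 1") (auto simp: bernoulli_0)

(* Both sides count ordered choices of disjoint subsets of sizes i and j of an n-set. *)
lemma choose_mult_swap:
  assumes "i + j \<le> n"
  shows "(n choose j) * ((n - j) choose i) = (n choose i) * ((n - i) choose j)"
proof -
  have "(n choose j) * ((n - j) choose i) = (n choose (i + j)) * ((i + j) choose j)"
    using choose_mult[of j "i + j" n] assms by simp
  also have "\<dots> = (n choose (i + j)) * ((i + j) choose i)"
    using binomial_symmetric[of i "i + j"] by simp
  also have "\<dots> = (n choose i) * ((n - i) choose j)"
    using choose_mult[of i "i + j" n] assms by simp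
  finally show ?thesis .
qed

lemma pow2_minus_one_binomial: "(2::rat) ^ d - 1 = (\<Sum>i<d. of_nat (d choose i))"
proof -
  have "(2::rat) ^ d = (\<Sum>i\<le>d. of_nat (d choose i))"
    using choose_row_sum[of d] by (metis of_nat_numeral of_nat_power of_nat_sum)
  then show ?thesis by (simp add: lessThan_Suc_atMost[symmetric])
qed

(* Expand 2^(n+1-j) - 1 by the binomial theorem, exchange the two summations and apply
   the Bernoulli recurrence to every inner sum; only the inner sum of length 1 survives. *)
lemma bernoulli_sum_pow2_minus_one:
  "(\<Sum>j\<le>n. of_nat (Suc n choose j) * bernoulli j * (2 ^ (Suc n - j) - 1)) = (of_nat (Suc n) :: rat)"
proof -
  let ?T = "\<lambda>i j. of_nat (Suc n choose j) * of_nat ((Suc n - j) choose i) * bernoulli j :: rat"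
  have "(\<Sum>j\<le>n. of_nat (Suc n choose j) * bernoulli j * (2 ^ (Suc n - j) - 1))
      = (\<Sum>j\<le>n. \<Sum>i\<in>{i \<in> {..n}. i + j \<le> n}. ?T i j)"
  proof (rule sum.cong)
    fix j assume "j \<in> {..n}"
    then have "{i \<in> {..n}. i + j \<le> n} = {..<Suc n - j}" by auto
    then show "of_nat (Suc n choose j) * bernoulli j * (2 ^ (Suc n - j) - 1)
        = (\<Sum>i\<in>{i \<in> {..n}. i + j \<le> n}. ?T i j)"
      by (simp add: pow2_minus_one_binomial sum_distrib_left algebra_simps)
  qed simp
  also have "\<dots> = (\<Sum>i\<le>n. \<Sum>j\<in>{j \<in> {..n}. i + j \<le> n}. ?T i j)"
    by (rule sum.swap_restrict) auto
  also have "\<dots> = (\<Sum>i\<le>n. of_nat (Suc n choose i) *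
                     (\<Sum>j<Suc n - i. of_nat ((Suc n - i) choose j) * bernoulli j))"
  proof (rule sum.cong)
    fix i assume "i \<in> {..n}"
    then have range: "{j \<in> {..n}. i + j \<le> n} = {..<Suc n - i}" by auto
    have swap: "?T i j = of_nat (Suc n choose i) * (of_nat ((Suc n - i) choose j) * bernoulli j)"
      if "j < Suc n - i" for j
      using choose_mult_swap[of i j "Suc n"] that
      by (metis (mono_tags) less_diff_conv add.commute less_imp_le_nat mult.assoc of_nat_mult)
    show "(\<Sum>j\<in>{j \<in> {..n}. i + j \<le> n}. ?T i j)
        = of_nat (Suc n choose i) * (\<Sum>j<Suc n - i. of_nat ((Suc n - i) choose j) * bernoulli j)"
      unfolding range sum_distrib_left by (rule sum.cong[OF refl], rule swap, simp)
  qed simp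
  also have "\<dots> = (\<Sum>i\<le>n. if i = n then of_nat (Suc n) else 0)"
    by (rule sum.cong) (auto simp: bernoulli_recurrence')
  finally show ?thesis by simp
qed

(* Adding the (vanishing) recurrence sum for n+1 gives the key identity of step (1). *)
lemma bernoulli_weighted_sum:
  assumes "n > 0"
  shows "(\<Sum>j\<le>n. of_nat (Suc n choose j) * 2 ^ (Suc n - j) * bernoulli j) = (of_nat (Suc n) :: rat)"
proof -
  have "(\<Sum>j\<le>n. of_nat (Suc n choose j) * 2 ^ (Suc n - j) * bernoulli j)
     = (\<Sum>j\<le>n. of_nat (Suc n choose j) * bernoulli j * (2 ^ (Suc n - j) - 1))
       + (\<Sum>j<Suc n. of_nat (Suc n choose j) * bernoulli j)"
    by (simp add: lessThan_Suc_atMost sum.distrib[symmetric] algebra_simps)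
  then show ?thesis
    using bernoulli_sum_pow2_minus_one[of n] bernoulli_recurrence[of "Suc n"] assms by simp
qed

(* Dividing the key identity by n+1 expresses 2 B_n through the 2 B_j, j < n, using
   C(n+1,j) = (n+1) C(n,j) / (n+1-j). *)
lemma bernoulli_double_recursion:
  assumes "n > 0"
  shows "2 * bernoulli n
       = 1 - (\<Sum>j<n. of_nat (n choose j) * (2 ^ (n - j) / of_nat (Suc n - j)) * (2 * bernoulli j))"
proof -
  define c :: "nat \<Rightarrow> rat" where "c j = of_nat (n choose j) * (2 ^ (n - j) / of_nat (Suc n - j))" for j
  have summand: "of_nat (Suc n choose j) * 2 ^ (Suc n - j) * bernoulli j
            = of_nat (Suc n) * (c j * (2 * bernoulli j))" if "j \<le> n" for j
  proof -
    have nonzero: "of_nat (Suc n - j) \<noteq> (0::rat)" using that by simp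
    have "of_nat (Suc n - j) * of_nat (Suc n choose j) = (of_nat (Suc n) * of_nat (n choose j) :: rat)"
      using binomial_absorb_comp[of "Suc n" j] by (metis diff_Suc_1 of_nat_mult)
    then have binom: "of_nat (Suc n choose j) = (of_nat (Suc n) * of_nat (n choose j) / of_nat (Suc n - j) :: rat)"
      using nonzero by (simp add: field_simps)
    have pow: "(2::rat) ^ (Suc n - j) = 2 * 2 ^ (n - j)"
      using that by (simp add: Suc_diff_le)
    show ?thesis unfolding binom pow c_def using nonzero by (simp del: of_nat_Suc)
  qed
  have last: "c n = 1" unfolding c_def by simp
  have "of_nat (Suc n) = (\<Sum>j\<le>n. of_nat (Suc n choose j) * 2 ^ (Suc n - j) * bernoulli j)"
    using bernoulli_weighted_sum[OF assms] by simp
  also have "\<dots> = of_nat (Suc n) * ((\<Sum>j<n. c j * (2 * bernoulli j)) + 2 * bernoulli n)"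
    by (simp add: summand last sum_distrib_left distrib_left lessThan_Suc_atMost[symmetric] del: of_nat_Suc)
  finally have "1 = (\<Sum>j<n. c j * (2 * bernoulli j)) + 2 * bernoulli n"
    by (metis mult_cancel_left1 of_nat_eq_0_iff nat.distinct(1))
  then show ?thesis unfolding c_def by (simp add: algebra_simps)
qed

definition two_integral :: "rat \<Rightarrow> bool" where
  "two_integral q \<longleftrightarrow> (\<exists>a b::int. odd b \<and> q = of_int a / of_int b)"

lemma two_integral_of_int [simp]: "two_integral (of_int a)"
  unfolding two_integral_def by (rule exI[of _ a], rule exI[of _ 1]) simp

lemma two_integral_0 [simp]: "two_integral 0" and two_integral_1 [simp]: "two_integral 1"
  using two_integral_of_int[of 0] two_integral_of_int[of 1] by simp_all

lemma two_integral_of_nat [simp]: "two_integral (of_nat a)"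
  using two_integral_of_int[of "int a"] by simp

lemma two_integral_numeral [simp]: "two_integral (numeral w)"
  using two_integral_of_nat[of "numeral w"] by simp

lemma two_integral_add:
  assumes "two_integral x" "two_integral y"
  shows "two_integral (x + y)"
proof -
  obtain a b where ab: "odd b" "x = of_int a / of_int b"
    using assms(1) unfolding two_integral_def by blast
  obtain c d where cd: "odd d" "y = of_int c / of_int d"
    using assms(2) unfolding two_integral_def by blast
  have "of_int b \<noteq> (0::rat)" "of_int d \<noteq> (0::rat)" using ab(1) cd(1) by auto
  then have "x + y = of_int (a * d + c * b) / of_int (b * d)"
    using ab cd by (simp add: field_simps)
  moreover have "odd (b * d)" using ab cd by simp
  ultimately show ?thesis unfolding two_integral_def by blast
qed

lemma two_integral_mult:
  assumes "two_integral x" "two_integral y"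
  shows "two_integral (x * y)"
proof -
  obtain a b where "odd b" "x = of_int a / of_int b"
    using assms(1) unfolding two_integral_def by blast
  moreover obtain c d where "odd d" "y = of_int c / of_int d"
    using assms(2) unfolding two_integral_def by blast
  ultimately show ?thesis
    unfolding two_integral_def by (intro exI[of _ "a * c"] exI[of _ "b * d"]) auto
qed

lemma two_integral_diff:
  assumes "two_integral x" "two_integral y"
  shows "two_integral (x - y)"
  using two_integral_add[OF assms(1) two_integral_mult[OF two_integral_of_int[of "-1"] assms(2)]]
  by simp

lemma two_integral_abs:
  assumes "two_integral x"
  shows "two_integral \<bar>x\<bar>"
proof -
  have "two_integral (0 - x)" using two_integral_diff[OF two_integral_0 assms] .
  with assms show ?thesis by (simp add: abs_if)
qed

lemma two_integral_power: "two_integral x \<Longrightarrow> two_integral (x ^ n)"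
  by (induction n) (auto intro: two_integral_mult)

lemma two_integral_sum:
  "(\<And>i. i \<in> A \<Longrightarrow> two_integral (f i)) \<Longrightarrow> two_integral (sum f A)"
  by (induction A rule: infinite_finite_induct) (auto intro: two_integral_add)

lemma two_integral_divide_odd:
  assumes "two_integral x" "odd c"
  shows "two_integral (x / of_nat c)"
proof -
  obtain a b where "odd b" "x = of_int a / of_int b"
    using assms(1) unfolding two_integral_def by blast
  with assms(2) show ?thesis
    unfolding two_integral_def by (intro exI[of _ a] exI[of _ "b * int c"]) auto
qed

(* 2^(d-1)/d is 2-integral: for odd d trivially, and for d = 2e it equals
   2^(e-1) * (2^(e-1)/e). *)
lemma two_integral_pow2_div:
  assumes "d > 0"
  shows "two_integral (2 ^ (d - 1) / of_nat d)"
  using assms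
proof (induction d rule: less_induct)
  case (less d)
  show ?case
  proof (cases "even d")
    case False
    show ?thesis by (rule two_integral_divide_odd[OF two_integral_power[OF two_integral_numeral] False])
  next
    case True
    then obtain e where e: "d = 2 * e" by blast
    with less.prems obtain f where f: "e = Suc f" by (cases e) auto
    have "d - 1 = f + f + 1" using e f by simp
    then have "(2::rat) ^ (d - 1) = 2 * (2 ^ f * 2 ^ f)" by (simp only: power_add) simp
    then have "(2::rat) ^ (d - 1) / of_nat d = 2 ^ f * (2 ^ (e - 1) / of_nat e)"
      using e f by (simp add: field_simps)
    moreover have "two_integral (2 ^ (e - 1) / of_nat e)" using less.IH[of e] e f by simp
    ultimately show ?thesis by (metis two_integral_mult two_integral_power two_integral_numeral)
  qed
qed

lemma two_integral_bernoulli: "two_integral (2 * bernoulli n)"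
proof (induction n rule: less_induct)
  case (less n)
  show ?case
  proof (cases "n = 0")
    case True
    then show ?thesis by (simp add: bernoulli_0)
  next
    case False
    have "two_integral (of_nat (n choose j) * (2 ^ (n - j) / of_nat (Suc n - j)) * (2 * bernoulli j))"
      if "j < n" for j
    proof (rule two_integral_mult[OF two_integral_mult[OF two_integral_of_nat]])
      show "two_integral (2 ^ (n - j) / of_nat (Suc n - j))"
        using two_integral_pow2_div[of "Suc n - j"] that by simp
      show "two_integral (2 * bernoulli j)" using less.IH that .
    qed
    then have "two_integral (1 - (\<Sum>j<n. of_nat (n choose j) * (2 ^ (n - j) / of_nat (Suc n - j)) * (2 * bernoulli j)))"
      by (intro two_integral_diff two_integral_1 two_integral_sum) simp
    with False show ?thesis by (subst bernoulli_double_recursion) simp_all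
  qed
qed

lemma popcount_0 [simp]: "popcount 0 = 0"
  by (simp add: popcount.simps)

lemma popcount_double [simp]: "popcount (2 * q) = popcount q"
  by (subst popcount.simps) simp

lemma popcount_double_plus_one [simp]: "popcount (Suc (2 * q)) = Suc (popcount q)"
  by (subst popcount.simps) simp

lemma popcount_le: "popcount n \<le> n"
proof (induction n rule: less_induct)
  case (less n)
  show ?case
  proof (cases "n = 0")
    case False
    then have "popcount (n div 2) \<le> n div 2" by (intro less.IH) simp
    then show ?thesis by (subst popcount.simps) presburger
  qed simp
qed

lemma popcount_pos: "n > 0 \<Longrightarrow> popcount n > 0"
proof (induction n rule: less_induct)
  case (less n)
  show ?case
  proof (cases "odd n")
    case False
    then have "popcount (n div 2) > 0" using less by (intro less.IH) auto
    then show ?thesis using less.prems by (subst popcount.simps) simp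
  qed (subst popcount.simps, auto simp: odd_iff_mod_2_eq_one odd_pos)
qed

(* (2q)! = 2^q q! (1 * 3 * ... * (2q-1)). *)
lemma fact_double_odd_part: "\<exists>c::nat. odd c \<and> fact (2 * q) = 2 ^ q * fact q * c"
proof (induction q)
  case (Suc q)
  then obtain c :: nat where c: "odd c" "fact (2 * q) = 2 ^ q * fact q * c" by blast
  have "fact (2 * Suc q) = (2 * q + 2) * ((2 * q + 1) * (fact (2 * q) :: nat))"
    by (simp add: algebra_simps)
  also have "\<dots> = 2 ^ Suc q * fact (Suc q) * (c * (2 * q + 1))"
    using c by (simp add: algebra_simps)
  finally show ?case using c by (intro exI[of _ "c * (2 * q + 1)"]) simp
qed simp

lemma legendre_two: "\<exists>c::nat. odd c \<and> fact n = 2 ^ (n - popcount n) * c"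
proof (induction n rule: less_induct)
  case (less n)
  show ?case
  proof (cases "n = 0")
    case False
    define q where "q = n div 2"
    obtain c :: nat where c: "odd c" "fact q = 2 ^ (q - popcount q) * c"
      using less.IH[of q] False by (auto simp: q_def)
    obtain d :: nat where d: "odd d" "fact (2 * q) = 2 ^ q * fact q * d"
      using fact_double_odd_part by blast
    have "q + (q - popcount q) = 2 * q - popcount q" using popcount_le[of q] by simp
    then have even_part: "fact (2 * q) = 2 ^ (2 * q - popcount q) * (c * d)"
      using c d by (metis mult.assoc power_add)
    consider "n = 2 * q" | "n = Suc (2 * q)"
      unfolding q_def by (metis even_two_times_div_two odd_two_times_div_two_succ Suc_eq_plus1)
    then show ?thesis
    proof cases
      case 1
      then show ?thesis using even_part c d by (intro exI[of _ "c * d"]) simp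
    next
      case 2
      then have exponent: "n - popcount n = 2 * q - popcount q"
        and factor: "fact n = (2 * q + 1) * fact (2 * q)"
        by simp_all
      have "fact n = 2 ^ (n - popcount n) * ((2 * q + 1) * (c * d))"
        by (simp only: exponent factor even_part) (simp add: algebra_simps)
      then show ?thesis using c d by (intro exI[of _ "(2 * q + 1) * (c * d)"]) simp
    qed
  qed simp
qed

(* The coefficient s_n is 2^(popcount n - 1) times a 2-integral rational: the factor
   2^(2n) exceeds the power 2^(2n - popcount n) in (2n)! by 2^(popcount n), and one
   further 2 is absorbed by the denominator of B_2n. *)
lemma s_single_two_adic:
  assumes "n > 0"
  obtains r where "two_integral r" and "s_single n = 2 ^ (popcount n - 1) * r"
proof -
  define p where "p = popcount n"
  have "p \<ge> 1" "p \<le> n" using popcount_pos[OF assms] popcount_le[of n] by (auto simp: p_def)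
  obtain c :: nat where c: "odd c" "fact (2 * n) = 2 ^ (2 * n - p) * c"
    using legendre_two[of "2 * n"] by (auto simp: p_def)
  then have fact_eq: "(fact (2 * n) :: rat) = 2 ^ (2 * n - p) * of_nat c"
    by (metis of_nat_fact of_nat_mult of_nat_numeral of_nat_power)
  have split_exponent: "2 * n = (p - 1) + (2 * n - p) + 1" using \<open>p \<ge> 1\<close> \<open>p \<le> n\<close> by simp
  have power_eq: "(2::rat) ^ (2 * n) = 2 ^ (p - 1) * 2 ^ (2 * n - p) * 2"
    by (subst split_exponent) (simp only: power_add power_one_right)
  define C where "C = 2 * bernoulli (2 * n)"
  have abs_eq: "\<bar>bernoulli (2 * n)\<bar> = \<bar>C\<bar> / 2" unfolding C_def by (simp add: abs_mult)
  have "of_nat c \<noteq> (0::rat)" using c(1) by (metis even_zero of_nat_eq_0_iff)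
  then have "s_single n = 2 ^ (p - 1) * ((2 ^ (2 * n - 1) - 1) * \<bar>C\<bar> / of_nat c)"
    unfolding s_single_def fact_eq abs_eq power_eq by (simp add: field_simps)
  moreover have "two_integral ((2 ^ (2 * n - 1) - 1) * \<bar>C\<bar> / of_nat c)"
    using c(1) two_integral_bernoulli[of "2 * n"] unfolding C_def[symmetric]
    by (intro two_integral_divide_odd two_integral_mult two_integral_diff two_integral_abs two_integral_power) simp_all
  ultimately show ?thesis using that unfolding p_def by blast
qed

(* If x/y in lowest terms equals 2^e a/b with b odd, then x b = 2^e a y, so 2^e divides x. *)
lemma numerator_dvd_two_integral:
  assumes "two_integral r"
  shows "(2::int) ^ e dvd numerator (2 ^ e * r)"
proof -
  obtain a b :: int where ab: "odd b" "r = of_int a / of_int b"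
    using assms unfolding two_integral_def by blast
  obtain x y where xy: "quotient_of (2 ^ e * r) = (x, y)" by (cases "quotient_of (2 ^ e * r)")
  have "y > 0" using quotient_of_denom_pos[OF xy] .
  moreover have "of_int x / of_int y = (2::rat) ^ e * (of_int a / of_int b)"
    using quotient_of_div[OF xy] ab(2) by simp
  moreover have "b \<noteq> 0" using ab(1) by auto
  ultimately have "of_int (x * b) = (of_int (2 ^ e * a * y) :: rat)" by (simp add: field_simps)
  then have "x * b = 2 ^ e * a * y" by (simp only: of_int_eq_iff)
  then have "(2::int) ^ e dvd x * b" by simp
  moreover have "coprime ((2::int) ^ e) b" using ab(1) by simp
  ultimately have "(2::int) ^ e dvd x" by (simp add: coprime_dvd_mult_left_iff)
  then show ?thesis unfolding numerator_def xy by simp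
qed

theorem proposition2p1:
  fixes k m :: nat
  assumes "k > 0" and "m = popcount k" and "m > 2"
  shows "(2::int) ^ (m - 2) dvd numerator (s_double k)
       \<and> (2::int) ^ (m - 2) dvd numerator (s_single (2 * k))"
proof -
  define t where "t = m - 2"
  have exponent: "popcount (2 * k) - 1 = popcount k - 1" "popcount k - 1 = Suc t"
    using assms(2,3) by (simp_all add: t_def)
  obtain r1 where r1: "two_integral r1" "s_single k = 2 ^ Suc t * r1"
    using s_single_two_adic[OF assms(1)] unfolding exponent .
  have "2 * k > 0" using assms(1) by simp
  obtain r2 where r2: "two_integral r2" "s_single (2 * k) = 2 ^ Suc t * r2"
    using s_single_two_adic[OF \<open>2 * k > 0\<close>] unfolding exponent .
  have "s_double k = 2 ^ t * (2 ^ Suc t * r1 ^ 2 - r2)"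
    unfolding s_double_def r1(2) r2(2) by (simp add: power2_eq_square field_simps)
  moreover have "two_integral (2 ^ Suc t * r1 ^ 2 - r2)"
    using r1(1) r2(1) by (intro two_integral_diff two_integral_mult two_integral_power two_integral_numeral)
  moreover have "s_single (2 * k) = 2 ^ t * (2 * r2)" unfolding r2(2) by simp
  moreover have "two_integral (2 * r2)"
    using r2(1) by (intro two_integral_mult two_integral_numeral)
  ultimately show ?thesis
    unfolding t_def[symmetric] by (metis numerator_dvd_two_integral)
qed
end
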